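(* Consider $N$ material points $(P_i,m_i)$ whose Cartesian coordinates are given by a smooth map $\mathbf X(\mathbf q,t)\in\mathbb R^{3N}$, $\mathbf q\in\mathbb R^\ell$, and let $\mathbf Q=(m_1\dot P_1,\dots,m_N\dot P_N)\in\mathbb R^{3N}$ be the vector of momenta. For $r\ge0$ define $\mathcal T_r=\frac12\,\mathbf Q^{(r)}\cdot\mathbf X^{(r+1)}=\frac12\sum_{i=1}^N m_i|P_i^{(r+1)}|^2$, viewed as a function of $\mathbf q,\dots,\mathbf q^{(r+1)},t$. Then for every $k=1,\dots,\ell$, $$\mathbf Q^{(r+1)}\cdot\frac{\partial\mathbf X}{\partial q_k}=\frac{d}{dt}\frac{\partial\mathcal T_r}{\partial q_k^{(r+1)}}-\frac1{r+1}\frac{\partial\mathcal T_r}{\partial q_k^{(r)}}.$$ Equivalently, $J_{\mathbf q}^T\mathbf X\,\mathbf Q^{(r+1)}=-\frac1{r+1}\mathcal O_r[\mathcal T_r]$.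
   Context: $\mathbf q^{(h)}$ denotes the $h$-th time derivative (with $\mathbf q^{(0)}=\mathbf q$), treated as independent variables; $\mathbf X^{(h)}$ is the $h$-th total time derivative of $\mathbf X(\mathbf q(t),t)$ expressed as a function of $\mathbf q,\dots,\mathbf q^{(h)},t$. For $F(\mathbf q,\dots,\mathbf q^{(k)},t)$, $\frac{dF}{dt}=\partial_tF+\sum_{j=0}^k\nabla_{\mathbf q^{(j)}}F\cdot\mathbf q^{(j+1)}$. For $\mathbf w\in\mathbb R^{3N}$, $J_{\mathbf q}^T\mathbf X\,\mathbf w$ is the $\ell$-vector with components $\mathbf w\cdot\partial\mathbf X/\partial q_k$ (Lagrangian components of $\mathbf w$). $\mathcal O_r[\mathcal Y_r]=\nabla_{\mathbf q^{(r)}}\mathcal Y_r-(r+1)\frac{d}{dt}\nabla_{\mathbf q^{(r+1)}}\mathcal Y_r$. *)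

theory Defs
  imports "HOL-Analysis.Analysis"
begin

text \<open>Iterated directional derivatives: the list [v1,...,vn] means differentiate
  first along vn, then ..., finally along v1.\<close>
fun iter_dirderiv ::
  "('a::real_normed_vector \<Rightarrow> 'b::real_normed_vector) \<Rightarrow> 'a list \<Rightarrow> 'a \<Rightarrow> 'b" where
  "iter_dirderiv f [] = f"
| "iter_dirderiv f (v # vs) =
     (\<lambda>x. vector_derivative (\<lambda>s::real. iter_dirderiv f vs (x + s *\<^sub>R v)) (at 0))"

definition smooth :: "('a::real_normed_vector \<Rightarrow> 'b::real_normed_vector) \<Rightarrow> bool" where
  "smooth f \<longleftrightarrow> (\<forall>vs x. iter_dirderiv f vs differentiable (at x))"

text \<open>A point of jet space is a pair (qs, t) where qs j = q^(j) \<in> R^l (only finitely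
  many j matter) and t is time. Functions F(q, ..., q^(k), t) are modelled as
  functions of (qs, t) that only depend on qs 0, ..., qs k.\<close>

type_synonym ('l, 'b) jetfun = "(nat \<Rightarrow> real ^ 'l) \<Rightarrow> real \<Rightarrow> 'b"

definition pderiv_q ::
  "nat \<Rightarrow> 'l::finite \<Rightarrow> ('l, 'b::real_normed_vector) jetfun \<Rightarrow> ('l, 'b) jetfun" where
  "pderiv_q j k F = (\<lambda>qs t. vector_derivative
       (\<lambda>s::real. F (qs(j := qs j + s *\<^sub>R axis k 1)) t) (at 0))"

definition pderiv_t :: "('l::finite, 'b::real_normed_vector) jetfun \<Rightarrow> ('l, 'b) jetfun" where
  "pderiv_t F = (\<lambda>qs t. vector_derivative (\<lambda>\<tau>. F qs \<tau>) (at t))"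

definition total_dt ::
  "nat \<Rightarrow> ('l::finite, 'b::real_normed_vector) jetfun \<Rightarrow> ('l, 'b) jetfun" where
  "total_dt kk F = (\<lambda>qs t. pderiv_t F qs t +
       (\<Sum>j\<le>kk. \<Sum>k\<in>UNIV. (qs (Suc j) $ k) *\<^sub>R pderiv_q j k F qs t))"

text \<open>X (q, t) $ i \<in> R^3 is the position of the point P_i ('p is the finite index
  set of the N points, so X(q,t) \<in> R^{3N}).\<close>
fun Xder :: "((real ^ 'l) \<times> real \<Rightarrow> real ^ 3 ^ 'p) \<Rightarrow> nat \<Rightarrow> ('l::finite, real ^ 3 ^ 'p) jetfun" where
  "Xder X 0 = (\<lambda>qs t. X (qs 0, t))"
| "Xder X (Suc h) = total_dt h (Xder X h)"

definition Qder :: "('p::finite \<Rightarrow> real) \<Rightarrow> ((real ^ 'l) \<times> real \<Rightarrow> real ^ 3 ^ 'p) \<Rightarrow> nat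
    \<Rightarrow> ('l::finite, real ^ 3 ^ 'p) jetfun" where
  "Qder m X r = (\<lambda>qs t. \<chi> i. m i *\<^sub>R (Xder X (Suc r) qs t $ i))"

definition Tr :: "('p::finite \<Rightarrow> real) \<Rightarrow> ((real ^ 'l) \<times> real \<Rightarrow> real ^ 3 ^ 'p) \<Rightarrow> nat
    \<Rightarrow> ('l::finite, real) jetfun" where
  "Tr m X r = (\<lambda>qs t. (1/2) * (Qder m X r qs t \<bullet> Xder X (Suc r) qs t))"

end

theory Submission
  imports Defs
begin

text \<open>
  Let M be the (diagonal) mass operator, so that Q^(r) = M X^(r+1) and
  T_r = 1/2 M X^(r+1) . X^(r+1), and let J = dX/dq_k. Every X^(h) is a polynomial in the
  jet variables whose coefficients are derivatives of X, and on such expressions all partial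
  derivatives commute (Schwarz). Hence d/dq^(a) (dF/dt) = d/dt (dF/dq^(a)) + dF/dq^(a-1), and
  induction on the order gives dX^(r+1)/dq^(r+1) = J and dX^(r+1)/dq^(r) = (r+1) dJ/dt.
  As M is symmetric, dT_r/dq^(r+1) = M X^(r+1) . J and dT_r/dq^(r) = (r+1) M X^(r+1) . dJ/dt,
  and the product rule d/dt (M X^(r+1) . J) = M X^(r+1) . dJ/dt + Q^(r+1) . J finishes the proof.
\<close>

section \<open>Directional derivatives and symmetry of mixed derivatives\<close>

definition dirderiv :: "('a::real_normed_vector \<Rightarrow> 'b::real_normed_vector) \<Rightarrow> 'a \<Rightarrow> 'a \<Rightarrow> 'b" where
  "dirderiv f u x = vector_derivative (\<lambda>s::real. f (x + s *\<^sub>R u)) (at 0)"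

lemma iter_dirderiv_Cons: "iter_dirderiv f (u # vs) = dirderiv (iter_dirderiv f vs) u"
  by (simp add: dirderiv_def fun_eq_iff)

lemma has_vector_derivative_along_line:
  assumes "(f has_derivative f') (at (x + s0 *\<^sub>R u))"
  shows "((\<lambda>s. f (x + s *\<^sub>R u)) has_vector_derivative f' u) (at s0)"
proof -
  have "((\<lambda>s::real. x + s *\<^sub>R u) has_derivative (\<lambda>h. h *\<^sub>R u)) (at s0)"
    by (auto intro!: derivative_eq_intros)
  from diff_chain_at[OF this assms] show ?thesis
    by (simp add: has_vector_derivative_def o_def linear_cmul[OF has_derivative_linear[OF assms]])
qed

lemma dirderiv_eq_frechet:
  assumes "(f has_derivative f') (at x)"
  shows "dirderiv f u x = f' u"
  unfolding dirderiv_def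
  by (rule vector_derivative_at) (use has_vector_derivative_along_line[of f f' x 0 u] assms in simp)

lemma has_vector_derivative_dirderiv:
  assumes "f differentiable (at (x + s0 *\<^sub>R u))"
  shows "((\<lambda>s. f (x + s *\<^sub>R u)) has_vector_derivative dirderiv f u (x + s0 *\<^sub>R u)) (at s0)"
  using assms has_vector_derivative_along_line dirderiv_eq_frechet
  unfolding differentiable_def by metis

lemma second_difference_mean_value:
  fixes g :: "'a::real_normed_vector \<Rightarrow> real"
  assumes g: "\<And>y. g differentiable (at y)"
    and gu: "\<And>y. dirderiv g u differentiable (at y)"
    and "0 < s"
  obtains a b where "0 < a" "a < s" "0 < b" "b < s"
    "g (x + s *\<^sub>R u + s *\<^sub>R w) - g (x + s *\<^sub>R u) - g (x + s *\<^sub>R w) + g x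
       = s * s * dirderiv (dirderiv g u) w (x + a *\<^sub>R u + b *\<^sub>R w)"
proof -
  have "\<exists>a>0. a < s \<and>
      (g (x + s *\<^sub>R w + s *\<^sub>R u) - g (x + s *\<^sub>R u)) - (g (x + s *\<^sub>R w + 0 *\<^sub>R u) - g (x + 0 *\<^sub>R u))
       = (s - 0) * (dirderiv g u (x + s *\<^sub>R w + a *\<^sub>R u) - dirderiv g u (x + a *\<^sub>R u))"
    by (rule MVT2[OF \<open>0 < s\<close>], unfold has_real_derivative_iff_has_vector_derivative)
       (intro has_vector_derivative_diff has_vector_derivative_dirderiv g)
  then obtain a where a: "0 < a" "a < s"
    "(g (x + s *\<^sub>R w + s *\<^sub>R u) - g (x + s *\<^sub>R u)) - (g (x + s *\<^sub>R w) - g x)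
       = s * (dirderiv g u (x + s *\<^sub>R w + a *\<^sub>R u) - dirderiv g u (x + a *\<^sub>R u))"
    by auto
  have "\<exists>b>0. b < s \<and>
      dirderiv g u (x + a *\<^sub>R u + s *\<^sub>R w) - dirderiv g u (x + a *\<^sub>R u + 0 *\<^sub>R w)
       = (s - 0) * dirderiv (dirderiv g u) w (x + a *\<^sub>R u + b *\<^sub>R w)"
    by (rule MVT2[OF \<open>0 < s\<close>], unfold has_real_derivative_iff_has_vector_derivative)
       (intro has_vector_derivative_dirderiv gu)
  then obtain b where b: "0 < b" "b < s"
    "dirderiv g u (x + a *\<^sub>R u + s *\<^sub>R w) - dirderiv g u (x + a *\<^sub>R u)
       = s * dirderiv (dirderiv g u) w (x + a *\<^sub>R u + b *\<^sub>R w)"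
    by auto
  show thesis
    by (rule that[OF a(1,2) b(1,2)]) (use a(3) b(3) in \<open>simp add: algebra_simps\<close>)
qed

lemma mixed_dirderivs_agree_nearby:
  fixes g :: "'a::real_normed_vector \<Rightarrow> real"
  assumes g: "\<And>y. g differentiable (at y)"
    and gu: "\<And>y. dirderiv g u differentiable (at y)"
    and gw: "\<And>y. dirderiv g w differentiable (at y)"
    and "0 < d"
  obtains p p' where "dist p x < d" "dist p' x < d"
    "dirderiv (dirderiv g u) w p = dirderiv (dirderiv g w) u p'"
proof -
  have "0 < norm u + norm w + 1"
    by (simp add: add_nonneg_pos)
  define s where "s = d / (norm u + norm w + 1)"
  have "0 < s"
    using \<open>0 < d\<close> \<open>0 < norm u + norm w + 1\<close> by (simp add: s_def)
  have near: "dist (x + a *\<^sub>R u + b *\<^sub>R w) x < d" if "0 < a" "a < s" "0 < b" "b < s" for a b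
  proof -
    have "dist (x + a *\<^sub>R u + b *\<^sub>R w) x = norm (a *\<^sub>R u + b *\<^sub>R w)"
      by (simp add: dist_norm)
    also have "\<dots> \<le> norm (a *\<^sub>R u) + norm (b *\<^sub>R w)"
      by (rule norm_triangle_ineq)
    also have "\<dots> \<le> s * norm u + s * norm w"
      using that by (intro add_mono) (auto intro!: mult_right_mono)
    also have "\<dots> < s * (norm u + norm w + 1)"
      using \<open>0 < s\<close> by (simp add: distrib_left)
    also have "\<dots> = d"
      using \<open>0 < norm u + norm w + 1\<close> by (simp add: s_def)
    finally show ?thesis .
  qed
  obtain a1 b1 where ab1: "0 < a1" "a1 < s" "0 < b1" "b1 < s"
    "g (x + s *\<^sub>R u + s *\<^sub>R w) - g (x + s *\<^sub>R u) - g (x + s *\<^sub>R w) + g x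
       = s * s * dirderiv (dirderiv g u) w (x + a1 *\<^sub>R u + b1 *\<^sub>R w)"
    by (rule second_difference_mean_value[OF g gu \<open>0 < s\<close>])
  obtain a2 b2 where ab2: "0 < a2" "a2 < s" "0 < b2" "b2 < s"
    "g (x + s *\<^sub>R w + s *\<^sub>R u) - g (x + s *\<^sub>R w) - g (x + s *\<^sub>R u) + g x
       = s * s * dirderiv (dirderiv g w) u (x + a2 *\<^sub>R w + b2 *\<^sub>R u)"
    by (rule second_difference_mean_value[OF g gw \<open>0 < s\<close>])
  have swap: "x + a *\<^sub>R w + b *\<^sub>R u = x + b *\<^sub>R u + a *\<^sub>R w" for a b
    by (simp add: add_ac)
  have "s * s * dirderiv (dirderiv g u) w (x + a1 *\<^sub>R u + b1 *\<^sub>R w)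
      = s * s * dirderiv (dirderiv g w) u (x + b2 *\<^sub>R u + a2 *\<^sub>R w)"
    using ab1(5) ab2(5) unfolding swap by linarith
  with \<open>0 < s\<close> show thesis
    by (intro that[OF near[OF ab1(1-4)] near[OF ab2(3,4,1,2)]]) simp
qed

lemma dirderiv_commute_real:
  fixes g :: "'a::real_normed_vector \<Rightarrow> real"
  assumes g: "\<And>y. g differentiable (at y)"
    and gu: "\<And>y. dirderiv g u differentiable (at y)"
    and gw: "\<And>y. dirderiv g w differentiable (at y)"
    and guw: "\<And>y. dirderiv (dirderiv g u) w differentiable (at y)"
    and gwu: "\<And>y. dirderiv (dirderiv g w) u differentiable (at y)"
  shows "dirderiv (dirderiv g u) w x = dirderiv (dirderiv g w) u x"
proof -
  define A where "A = dirderiv (dirderiv g u) w"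
  define B where "B = dirderiv (dirderiv g w) u"
  have "isCont A x" "isCont B x"
    using guw gwu differentiable_imp_continuous_within unfolding A_def B_def by blast+
  have "\<bar>A x - B x\<bar> \<le> e" if "0 < e" for e
  proof -
    have "0 < e/2" using \<open>0 < e\<close> by simp
    obtain dA where "0 < dA" and dA: "\<And>y. dist y x < dA \<Longrightarrow> dist (A y) (A x) < e/2"
      using \<open>isCont A x\<close> \<open>0 < e/2\<close> unfolding continuous_at_eps_delta by blast
    obtain dB where "0 < dB" and dB: "\<And>y. dist y x < dB \<Longrightarrow> dist (B y) (B x) < e/2"
      using \<open>isCont B x\<close> \<open>0 < e/2\<close> unfolding continuous_at_eps_delta by blast
    obtain p p' where "dist p x < min dA dB" "dist p' x < min dA dB" and "A p = B p'"
      using mixed_dirderivs_agree_nearby[OF g gu gw, of "min dA dB" x] \<open>0 < dA\<close> \<open>0 < dB\<close>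
      unfolding A_def B_def by auto
    then have "\<bar>A p - A x\<bar> < e/2" "\<bar>B p' - B x\<bar> < e/2"
      using dA[of p] dB[of p'] by (simp_all add: dist_real_def)
    with \<open>A p = B p'\<close> show ?thesis
      by linarith
  qed
  then have "\<bar>A x - B x\<bar> \<le> 0"
    by (rule field_le_epsilon) simp
  then show ?thesis
    by (simp add: A_def B_def)
qed

lemma dirderiv_inner_left:
  assumes "\<And>y. f differentiable (at y)"
  shows "dirderiv (\<lambda>y. f y \<bullet> e) u = (\<lambda>y. dirderiv f u y \<bullet> e)"
proof
  fix y
  have "((\<lambda>s. f (y + s *\<^sub>R u) \<bullet> e) has_vector_derivative dirderiv f u y \<bullet> e) (at 0)"
    using bounded_bilinear.has_vector_derivative[OF bounded_bilinear_inner
        has_vector_derivative_dirderiv[of f y 0 u] has_vector_derivative_const[of e]] assms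
    by simp
  then show "dirderiv (\<lambda>y. f y \<bullet> e) u y = dirderiv f u y \<bullet> e"
    unfolding dirderiv_def by (rule vector_derivative_at)
qed

lemma dirderiv_commute:
  fixes f :: "'a::real_normed_vector \<Rightarrow> 'b::real_inner"
  assumes f: "\<And>y. f differentiable (at y)"
    and fu: "\<And>y. dirderiv f u differentiable (at y)"
    and fw: "\<And>y. dirderiv f w differentiable (at y)"
    and fuw: "\<And>y. dirderiv (dirderiv f u) w differentiable (at y)"
    and fwu: "\<And>y. dirderiv (dirderiv f w) u differentiable (at y)"
  shows "dirderiv (dirderiv f u) w x = dirderiv (dirderiv f w) u x"
proof (rule vector_eq_rdot[THEN iffD1], intro allI)
  fix e
  have inner_e: "(\<lambda>y. h y \<bullet> e) differentiable (at y)"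
    if "h differentiable (at y)" for h :: "'a \<Rightarrow> 'b" and y
    using that has_derivative_inner_left unfolding differentiable_def by blast
  have "dirderiv (dirderiv (\<lambda>y. f y \<bullet> e) u) w x = dirderiv (dirderiv (\<lambda>y. f y \<bullet> e) w) u x"
    by (rule dirderiv_commute_real)
       (use f fu fw fuw fwu inner_e in \<open>simp_all add: dirderiv_inner_left\<close>)
  then show "dirderiv (dirderiv f u) w x \<bullet> e = dirderiv (dirderiv f w) u x \<bullet> e"
    using f fu fw by (simp add: dirderiv_inner_left)
qed

lemma smooth_iter_dirderiv_swap:
  fixes X :: "'a::real_normed_vector \<Rightarrow> 'b::real_inner"
  assumes "smooth X"
  shows "iter_dirderiv X (u # w # vs) = iter_dirderiv X (w # u # vs)"
proof
  fix x
  have D: "\<And>vs y. iter_dirderiv X vs differentiable (at y)"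
    using assms by (simp add: smooth_def)
  show "iter_dirderiv X (u # w # vs) x = iter_dirderiv X (w # u # vs) x"
    unfolding iter_dirderiv_Cons
    by (rule dirderiv_commute)
       (use D D[of "_ # _", unfolded iter_dirderiv_Cons]
          D[of "_ # _ # _", unfolded iter_dirderiv_Cons] in auto)
qed

section \<open>Polynomial jet expressions\<close>

declare iter_dirderiv.simps(2) [simp del]

text \<open>The class contains every X^(h) and is closed under the partial derivatives in q^(j)
  and t and under the total derivative; on it these partial derivatives exist and commute.\<close>

inductive jet_expr :: "((real ^ 'l) \<times> real \<Rightarrow> 'b::real_inner) \<Rightarrow> ('l::finite, 'b) jetfun \<Rightarrow> bool"
  for X where
  jet_expr_iter_dirderiv: "jet_expr X (\<lambda>qs t. iter_dirderiv X vs (qs 0, t))"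
| jet_expr_zero: "jet_expr X (\<lambda>qs t. 0)"
| jet_expr_add: "jet_expr X F \<Longrightarrow> jet_expr X G \<Longrightarrow> jet_expr X (\<lambda>qs t. F qs t + G qs t)"
| jet_expr_scaleR: "jet_expr X F \<Longrightarrow> jet_expr X (\<lambda>qs t. c *\<^sub>R F qs t)"
| jet_expr_coord_scaleR: "jet_expr X F \<Longrightarrow> jet_expr X (\<lambda>qs t. (qs j $ i) *\<^sub>R F qs t)"

lemma jet_expr_sum:
  "finite S \<Longrightarrow> (\<And>x. x \<in> S \<Longrightarrow> jet_expr X (G x)) \<Longrightarrow> jet_expr X (\<lambda>qs t. \<Sum>x\<in>S. G x qs t)"
  by (induction S rule: finite_induct) (auto intro: jet_expr.intros)

lemma jet_expr_if: "jet_expr X F \<Longrightarrow> jet_expr X (\<lambda>qs t. if P then F qs t else 0)"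
  by (cases P) (simp_all add: jet_expr.intros)

lemma pderiv_q_eqI:
  "((\<lambda>s. F (qs(j := qs j + s *\<^sub>R axis k 1)) t) has_vector_derivative D) (at 0) \<Longrightarrow>
   pderiv_q j k F qs t = D"
  by (simp add: pderiv_q_def vector_derivative_at)

lemma pderiv_t_eqI: "((\<lambda>\<tau>. F qs \<tau>) has_vector_derivative D) (at t) \<Longrightarrow> pderiv_t F qs t = D"
  by (simp add: pderiv_t_def vector_derivative_at)

lemma pderiv_q_zero: "pderiv_q j k (\<lambda>qs t. 0 :: 'b::real_normed_vector) = (\<lambda>qs t. 0)"
  by (intro ext pderiv_q_eqI) simp

lemma pderiv_t_zero: "pderiv_t (\<lambda>qs t. 0 :: 'b::real_normed_vector) = (\<lambda>qs t. 0)"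
  by (intro ext pderiv_t_eqI) simp

lemma total_dt_zero: "total_dt kk (\<lambda>qs t. 0 :: 'b::real_normed_vector) = (\<lambda>qs t. 0)"
  by (simp add: total_dt_def pderiv_q_zero pderiv_t_zero)

lemma pderiv_q_if:
  "pderiv_q j k (\<lambda>qs t. if P then F qs t else 0) = (\<lambda>qs t. if P then pderiv_q j k F qs t else 0)"
  by (cases P) (simp_all add: pderiv_q_zero)

lemma pderiv_t_if:
  "pderiv_t (\<lambda>qs t. if P then F qs t else 0) = (\<lambda>qs t. if P then pderiv_t F qs t else 0)"
  by (cases P) (simp_all add: pderiv_t_zero)

lemma sum_Kronecker_shifted:
  fixes G :: "nat \<Rightarrow> 'k::finite \<Rightarrow> 'c::real_vector"
  shows "(\<Sum>j\<le>kk. \<Sum>k\<in>UNIV. if a = Suc j \<and> b = k then G j k else 0)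
    = (if 0 < a \<and> a \<le> Suc kk then G (a - 1) b else 0)"
proof -
  have "(\<Sum>k\<in>UNIV. if a = Suc j \<and> b = k then G j k else 0)
      = (if j = a - 1 then (if 0 < a then G j b else 0) else 0)" for j
    by (cases "a = Suc j") auto
  then have "(\<Sum>j\<le>kk. \<Sum>k\<in>UNIV. if a = Suc j \<and> b = k then G j k else 0)
      = (\<Sum>j\<le>kk. if j = a - 1 then (if 0 < a then G j b else 0) else 0)"
    by simp
  also have "\<dots> = (if 0 < a \<and> a \<le> Suc kk then G (a - 1) b else 0)"
    by (subst sum.delta) auto
  finally show ?thesis .
qed

lemma has_real_derivative_coord_along_q:
  "((\<lambda>s. (qs(a := qs a + s *\<^sub>R axis b 1)) j $ i) has_real_derivative
      (if (a, b) = (j, i) then 1 else 0)) (at s0)"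
proof (cases "a = j")
  case True
  then have "(\<lambda>s. (qs(a := qs a + s *\<^sub>R axis b 1)) j $ i)
      = (\<lambda>s. qs j $ i + s * (if i = b then 1 else 0))"
    by (auto simp: axis_def)
  then show ?thesis using True by (auto intro!: derivative_eq_intros)
qed simp

context
  fixes X :: "(real ^ 'l::finite) \<times> real \<Rightarrow> 'b::real_inner"
  assumes X: "smooth X"
begin

lemma differentiable_iter_dirderiv: "iter_dirderiv X vs differentiable (at x)"
  using X unfolding smooth_def by blast

lemma has_pderiv_q_iter_dirderiv:
  "((\<lambda>s. iter_dirderiv X vs ((qs(j := qs j + s *\<^sub>R axis k 1)) 0, t)) has_vector_derivative
      (if j = 0 then iter_dirderiv X ((axis k 1, 0) # vs) (qs 0, t) else 0)) (at 0)"
proof (cases "j = 0")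
  case True
  have "((\<lambda>s. iter_dirderiv X vs ((qs 0, t) + s *\<^sub>R (axis k 1, 0))) has_vector_derivative
      iter_dirderiv X ((axis k 1, 0) # vs) (qs 0, t)) (at 0)"
    using has_vector_derivative_dirderiv[of "iter_dirderiv X vs" "(qs 0, t)" 0 "(axis k 1, 0)",
        OF differentiable_iter_dirderiv]
    unfolding iter_dirderiv_Cons by simp
  with True show ?thesis by simp
qed simp

lemma has_pderiv_t_iter_dirderiv:
  "((\<lambda>\<tau>. iter_dirderiv X vs (qs 0, \<tau>)) has_vector_derivative
      iter_dirderiv X ((0, 1) # vs) (qs 0, t)) (at t)"
  using has_vector_derivative_dirderiv[of "iter_dirderiv X vs" "(qs 0, 0)" t "(0, 1)",
      OF differentiable_iter_dirderiv]
  unfolding iter_dirderiv_Cons by simp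

lemma jet_expr_has_pderiv_q:
  assumes "jet_expr X F"
  shows "((\<lambda>s. F (qs(j := qs j + s *\<^sub>R axis k 1)) t) has_vector_derivative pderiv_q j k F qs t) (at 0)"
proof -
  have "(\<lambda>s. F (qs(j := qs j + s *\<^sub>R axis k 1)) t) differentiable (at 0)"
    using assms
  proof (induction arbitrary: qs t)
    case (jet_expr_iter_dirderiv vs)
    show ?case by (rule differentiableI_vector[OF has_pderiv_q_iter_dirderiv])
  next
    case (jet_expr_coord_scaleR F j' i)
    have "(\<lambda>s. (qs(j := qs j + s *\<^sub>R axis k 1)) j' $ i) differentiable (at 0)"
      using has_real_derivative_coord_along_q
      unfolding has_real_derivative_iff_has_vector_derivative by (rule differentiableI_vector)
    then show ?case
      using jet_expr_coord_scaleR.IH by (rule differentiable_scaleR)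
  qed simp_all
  then show ?thesis
    unfolding pderiv_q_def by (simp add: vector_derivative_works)
qed

lemma jet_expr_has_pderiv_t:
  assumes "jet_expr X F"
  shows "((\<lambda>\<tau>. F qs \<tau>) has_vector_derivative pderiv_t F qs t) (at t)"
proof -
  have "(\<lambda>\<tau>. F qs \<tau>) differentiable (at t)"
    using assms
  proof (induction arbitrary: qs t)
    case (jet_expr_iter_dirderiv vs)
    show ?case by (rule differentiableI_vector[OF has_pderiv_t_iter_dirderiv])
  qed simp_all
  then show ?thesis
    unfolding pderiv_t_def by (simp add: vector_derivative_works)
qed

lemma pderiv_q_iter_dirderiv:
  "pderiv_q j k (\<lambda>qs t. iter_dirderiv X vs (qs 0, t))
   = (\<lambda>qs t. if j = 0 then iter_dirderiv X ((axis k 1, 0) # vs) (qs 0, t) else 0)"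
  by (intro ext pderiv_q_eqI has_pderiv_q_iter_dirderiv)

lemma pderiv_q_add:
  "jet_expr X F \<Longrightarrow> jet_expr X G \<Longrightarrow>
   pderiv_q j k (\<lambda>qs t. F qs t + G qs t) = (\<lambda>qs t. pderiv_q j k F qs t + pderiv_q j k G qs t)"
  by (intro ext pderiv_q_eqI has_vector_derivative_add jet_expr_has_pderiv_q)

lemma pderiv_q_scaleR:
  "jet_expr X F \<Longrightarrow> pderiv_q j k (\<lambda>qs t. c *\<^sub>R F qs t) = (\<lambda>qs t. c *\<^sub>R pderiv_q j k F qs t)"
  by (intro ext pderiv_q_eqI bounded_linear.has_vector_derivative[OF bounded_linear_scaleR_right]
      jet_expr_has_pderiv_q)

lemma pderiv_q_coord_scaleR:
  assumes "jet_expr X F"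
  shows "pderiv_q a b (\<lambda>qs t. qs j $ i *\<^sub>R F qs t)
    = (\<lambda>qs t. qs j $ i *\<^sub>R pderiv_q a b F qs t + (if (a, b) = (j, i) then F qs t else 0))"
proof (intro ext pderiv_q_eqI)
  fix qs t
  have "((\<lambda>s. (qs(a := qs a + s *\<^sub>R axis b 1)) j $ i *\<^sub>R F (qs(a := qs a + s *\<^sub>R axis b 1)) t)
      has_vector_derivative (qs(a := qs a + 0 *\<^sub>R axis b 1)) j $ i *\<^sub>R pderiv_q a b F qs t
         + (if (a, b) = (j, i) then 1 else 0) *\<^sub>R F (qs(a := qs a + 0 *\<^sub>R axis b 1)) t) (at 0)"
    by (intro has_vector_derivative_scaleR has_real_derivative_coord_along_q
        jet_expr_has_pderiv_q assms)
  then show "((\<lambda>s. (qs(a := qs a + s *\<^sub>R axis b 1)) j $ i *\<^sub>R F (qs(a := qs a + s *\<^sub>R axis b 1)) t)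
      has_vector_derivative qs j $ i *\<^sub>R pderiv_q a b F qs t + (if (a, b) = (j, i) then F qs t else 0)) (at 0)"
    by (simp add: if_distrib[of "\<lambda>c. c *\<^sub>R _"] cong: if_cong)
qed

lemma pderiv_q_sum:
  "finite S \<Longrightarrow> (\<And>x. x \<in> S \<Longrightarrow> jet_expr X (G x)) \<Longrightarrow>
   pderiv_q j k (\<lambda>qs t. \<Sum>x\<in>S. G x qs t) = (\<lambda>qs t. \<Sum>x\<in>S. pderiv_q j k (G x) qs t)"
  by (induction S rule: finite_induct) (simp_all add: pderiv_q_zero pderiv_q_add jet_expr_sum)

lemma pderiv_t_iter_dirderiv:
  "pderiv_t (\<lambda>qs t. iter_dirderiv X vs (qs 0, t)) = (\<lambda>qs t. iter_dirderiv X ((0, 1) # vs) (qs 0, t))"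
  by (intro ext pderiv_t_eqI has_pderiv_t_iter_dirderiv)

lemma pderiv_t_add:
  "jet_expr X F \<Longrightarrow> jet_expr X G \<Longrightarrow>
   pderiv_t (\<lambda>qs t. F qs t + G qs t) = (\<lambda>qs t. pderiv_t F qs t + pderiv_t G qs t)"
  by (intro ext pderiv_t_eqI has_vector_derivative_add jet_expr_has_pderiv_t)

lemma pderiv_t_scaleR:
  "jet_expr X F \<Longrightarrow> pderiv_t (\<lambda>qs t. c *\<^sub>R F qs t) = (\<lambda>qs t. c *\<^sub>R pderiv_t F qs t)"
  by (intro ext pderiv_t_eqI bounded_linear.has_vector_derivative[OF bounded_linear_scaleR_right]
      jet_expr_has_pderiv_t)

lemma pderiv_t_coord_scaleR:
  "jet_expr X F \<Longrightarrow> pderiv_t (\<lambda>qs t. qs j $ i *\<^sub>R F qs t) = (\<lambda>qs t. qs j $ i *\<^sub>R pderiv_t F qs t)"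
  by (intro ext pderiv_t_eqI bounded_linear.has_vector_derivative[OF bounded_linear_scaleR_right]
      jet_expr_has_pderiv_t)

lemma jet_expr_pderiv_q: "jet_expr X F \<Longrightarrow> jet_expr X (pderiv_q j k F)"
proof (induction rule: jet_expr.induct)
  case (jet_expr_iter_dirderiv vs)
  show ?case
    by (cases "j = 0") (simp_all add: pderiv_q_iter_dirderiv jet_expr.intros)
next
  case jet_expr_zero
  show ?case by (simp add: pderiv_q_zero jet_expr.intros)
qed (simp_all add: pderiv_q_add pderiv_q_scaleR pderiv_q_coord_scaleR
       jet_expr.intros jet_expr_if)

lemma jet_expr_pderiv_t: "jet_expr X F \<Longrightarrow> jet_expr X (pderiv_t F)"
proof (induction rule: jet_expr.induct)
  case (jet_expr_iter_dirderiv vs)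
  show ?case by (simp add: pderiv_t_iter_dirderiv jet_expr.intros)
next
  case jet_expr_zero
  show ?case by (simp add: pderiv_t_zero jet_expr.intros)
qed (simp_all add: pderiv_t_add pderiv_t_scaleR pderiv_t_coord_scaleR
       jet_expr.intros)

lemma jet_expr_total_dt: "jet_expr X F \<Longrightarrow> jet_expr X (total_dt kk F)"
  unfolding total_dt_def
  by (intro jet_expr.intros jet_expr_sum jet_expr_pderiv_t jet_expr_pderiv_q finite_atMost finite)

lemma pderiv_q_commute:
  "jet_expr X F \<Longrightarrow> pderiv_q a b (pderiv_q c d F) = pderiv_q c d (pderiv_q a b F)"
proof (induction rule: jet_expr.induct)
  case (jet_expr_iter_dirderiv vs)
  show ?case
    by (cases "a = 0"; cases "c = 0")
       (simp_all add: pderiv_q_iter_dirderiv pderiv_q_zero smooth_iter_dirderiv_swap[OF X])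
next
  case jet_expr_zero
  show ?case by (simp add: pderiv_q_zero)
next
  case (jet_expr_coord_scaleR F j i)
  then show ?case
    by (simp add: pderiv_q_add pderiv_q_scaleR pderiv_q_coord_scaleR pderiv_q_if
        jet_expr.intros jet_expr_if jet_expr_pderiv_q fun_eq_iff algebra_simps)
qed (simp_all add: pderiv_q_add pderiv_q_scaleR jet_expr_pderiv_q)

lemma pderiv_q_pderiv_t_commute:
  "jet_expr X F \<Longrightarrow> pderiv_q a b (pderiv_t F) = pderiv_t (pderiv_q a b F)"
proof (induction rule: jet_expr.induct)
  case (jet_expr_iter_dirderiv vs)
  show ?case
    by (cases "a = 0")
       (simp_all add: pderiv_q_iter_dirderiv pderiv_t_iter_dirderiv pderiv_t_zero
         smooth_iter_dirderiv_swap[OF X])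
next
  case jet_expr_zero
  show ?case by (simp add: pderiv_q_zero pderiv_t_zero)
next
  case (jet_expr_coord_scaleR F j i)
  then show ?case
    by (simp add: pderiv_q_add pderiv_t_add pderiv_q_coord_scaleR
        pderiv_t_coord_scaleR pderiv_t_if jet_expr.intros jet_expr_if jet_expr_pderiv_q
        jet_expr_pderiv_t)
qed (simp_all add: pderiv_q_add pderiv_q_scaleR pderiv_t_add pderiv_t_scaleR
       jet_expr_pderiv_q jet_expr_pderiv_t)

lemma pderiv_q_total_dt:
  assumes F: "jet_expr X F"
  shows "pderiv_q a b (total_dt kk F)
    = (\<lambda>qs t. total_dt kk (pderiv_q a b F) qs t
        + (if 0 < a \<and> a \<le> Suc kk then pderiv_q (a - 1) b F qs t else 0))"
proof -
  have coord_terms: "jet_expr X (\<lambda>qs t. qs (Suc j) $ k *\<^sub>R pderiv_q j k F qs t)" for j k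
    by (intro jet_expr.intros jet_expr_pderiv_q F)
  have "pderiv_q a b (total_dt kk F) = (\<lambda>qs t. pderiv_t (pderiv_q a b F) qs t +
     (\<Sum>j\<le>kk. \<Sum>k\<in>UNIV. qs (Suc j) $ k *\<^sub>R pderiv_q j k (pderiv_q a b F) qs t
        + (if (a, b) = (Suc j, k) then pderiv_q j k F qs t else 0)))"
    unfolding total_dt_def
    by (simp add: pderiv_q_add pderiv_q_sum pderiv_q_coord_scaleR
        pderiv_q_commute[OF F] pderiv_q_pderiv_t_commute[OF F]
        jet_expr_sum jet_expr_pderiv_t jet_expr_pderiv_q F coord_terms)
  then show ?thesis
    by (simp add: total_dt_def sum.distrib sum_Kronecker_shifted algebra_simps)
qed

end

section \<open>Dependence on finitely many jet variables\<close>

definition depends_upto :: "nat \<Rightarrow> ('l::finite, 'b) jetfun \<Rightarrow> bool" where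
  "depends_upto n F \<longleftrightarrow> (\<forall>qs qs' t. (\<forall>j\<le>n. qs j = qs' j) \<longrightarrow> F qs t = F qs' t)"

lemma pderiv_q_eq_0_if_depends_upto:
  fixes F :: "('l::finite, 'b::real_normed_vector) jetfun"
  assumes "depends_upto n F" "n < j"
  shows "pderiv_q j k F = (\<lambda>qs t. 0)"
proof (intro ext pderiv_q_eqI)
  fix qs :: "nat \<Rightarrow> real ^ 'l" and t
  have "\<forall>i\<le>n. (qs(j := qs j + s *\<^sub>R axis k 1)) i = qs i" for s
    using \<open>n < j\<close> by auto
  then have "(\<lambda>s. F (qs(j := qs j + s *\<^sub>R axis k 1)) t) = (\<lambda>s. F qs t)"
    using assms(1) unfolding depends_upto_def by blast
  then show "((\<lambda>s. F (qs(j := qs j + s *\<^sub>R axis k 1)) t) has_vector_derivative 0) (at 0)"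
    by simp
qed

lemma depends_upto_pderiv_q:
  fixes F :: "('l::finite, 'b::real_normed_vector) jetfun"
  assumes "depends_upto n F"
  shows "depends_upto n (pderiv_q j k F)"
  unfolding depends_upto_def
proof (intro allI impI)
  fix qs qs' :: "nat \<Rightarrow> real ^ 'l" and t
  assume "\<forall>i\<le>n. qs i = qs' i"
  then have "\<forall>i\<le>n. (qs(j := qs j + s *\<^sub>R axis k 1)) i = (qs'(j := qs' j + s *\<^sub>R axis k 1)) i" for s
    by simp
  then have "F (qs(j := qs j + s *\<^sub>R axis k 1)) t = F (qs'(j := qs' j + s *\<^sub>R axis k 1)) t" for s
    using assms unfolding depends_upto_def by blast
  then show "pderiv_q j k F qs t = pderiv_q j k F qs' t"
    by (simp add: pderiv_q_def)
qed

lemma depends_upto_pderiv_t: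
  fixes F :: "('l::finite, 'b::real_normed_vector) jetfun"
  assumes "depends_upto n F"
  shows "depends_upto n (pderiv_t F)"
  unfolding depends_upto_def
proof (intro allI impI)
  fix qs qs' :: "nat \<Rightarrow> real ^ 'l" and t
  assume "\<forall>i\<le>n. qs i = qs' i"
  then have "(\<lambda>\<tau>. F qs \<tau>) = (\<lambda>\<tau>. F qs' \<tau>)"
    using assms unfolding depends_upto_def by blast
  then show "pderiv_t F qs t = pderiv_t F qs' t"
    by (simp add: pderiv_t_def)
qed

lemma depends_upto_total_dt:
  fixes F :: "('l::finite, 'b::real_normed_vector) jetfun"
  assumes "depends_upto kk F"
  shows "depends_upto (Suc kk) (total_dt kk F)"
  unfolding depends_upto_def
proof (intro allI impI)
  fix qs qs' :: "nat \<Rightarrow> real ^ 'l" and t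
  assume agree: "\<forall>i\<le>Suc kk. qs i = qs' i"
  then have "\<forall>i\<le>kk. qs i = qs' i" by simp
  then have "pderiv_t F qs t = pderiv_t F qs' t" "pderiv_q j k F qs t = pderiv_q j k F qs' t" for j k
    using depends_upto_pderiv_t[OF assms] depends_upto_pderiv_q[OF assms]
    unfolding depends_upto_def by blast+
  with agree show "total_dt kk F qs t = total_dt kk F qs' t"
    unfolding total_dt_def by (intro arg_cong2[where f = "(+)"] sum.cong) auto
qed

lemma total_dt_eq_if_depends_upto:
  fixes F :: "('l::finite, 'b::real_normed_vector) jetfun"
  assumes "depends_upto n F" "n \<le> kk"
  shows "total_dt kk F = total_dt n F"
  using \<open>n \<le> kk\<close>
proof (induction kk rule: dec_induct)
  case (step kk)
  have "pderiv_q (Suc kk) k F = (\<lambda>qs t. 0)" for k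
    using pderiv_q_eq_0_if_depends_upto[OF assms(1)] step.hyps by simp
  with step.IH show ?case
    unfolding total_dt_def by (simp add: fun_eq_iff)
qed simp

section \<open>Partial derivatives of the higher velocities\<close>

lemma depends_upto_Xder: "depends_upto h (Xder X h)"
proof (induction h)
  case 0
  show ?case by (simp add: depends_upto_def)
next
  case (Suc h)
  then show ?case by (simp add: depends_upto_total_dt)
qed

context
  fixes X :: "(real ^ 'l::finite) \<times> real \<Rightarrow> real ^ 3 ^ 'p::finite"
  assumes X: "smooth X"
begin

lemma jet_expr_Xder: "jet_expr X (Xder X h)"
proof (induction h)
  case 0
  show ?case
    using jet_expr_iter_dirderiv[of X "[]"] by simp
next
  case (Suc h)
  then show ?case
    by (simp add: jet_expr_total_dt[OF X])
qed

lemma pderiv_q_Xder_top: "pderiv_q h k (Xder X h) = pderiv_q 0 k (Xder X 0)"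
proof (induction h)
  case (Suc h)
  have "pderiv_q (Suc h) k (Xder X h) = (\<lambda>qs t. 0)"
    by (rule pderiv_q_eq_0_if_depends_upto[OF depends_upto_Xder]) simp
  with Suc.IH show ?case
    by (simp add: pderiv_q_total_dt[OF X jet_expr_Xder] total_dt_zero)
qed simp

lemma pderiv_q_Xder_below:
  "pderiv_q r k (Xder X (Suc r))
   = (\<lambda>qs t. real (Suc r) *\<^sub>R total_dt 0 (pderiv_q 0 k (Xder X 0)) qs t)"
proof (induction r)
  case 0
  show ?case
    unfolding Xder.simps(2)[of X 0] pderiv_q_total_dt[OF X jet_expr_Xder] by simp
next
  case (Suc r)
  define J where "J = pderiv_q 0 k (Xder X 0)"
  have "total_dt (Suc r) J = total_dt 0 J"
    unfolding J_def
    by (intro total_dt_eq_if_depends_upto depends_upto_pderiv_q depends_upto_Xder) simp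
  have "pderiv_q (Suc r) k (Xder X (Suc (Suc r)))
      = (\<lambda>qs t. total_dt (Suc r) (pderiv_q (Suc r) k (Xder X (Suc r))) qs t
          + pderiv_q r k (Xder X (Suc r)) qs t)"
    unfolding Xder.simps(2)[of X "Suc r"] pderiv_q_total_dt[OF X jet_expr_Xder] by simp
  also have "\<dots> = (\<lambda>qs t. total_dt 0 J qs t + real (Suc r) *\<^sub>R total_dt 0 J qs t)"
    by (simp only: pderiv_q_Xder_top[of "Suc r"] Suc.IH \<open>total_dt (Suc r) J = total_dt 0 J\<close> flip: J_def)
  also have "\<dots> = (\<lambda>qs t. real (Suc (Suc r)) *\<^sub>R total_dt 0 J qs t)"
    by (simp only: of_nat_Suc[of "Suc r"] scaleR_add_left scaleR_one)
  finally show ?case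
    unfolding J_def .
qed

end

section \<open>Quadratic forms in the velocities\<close>

lemma has_vector_derivative_inner_linear:
  assumes M: "bounded_linear M"
    and "(y has_vector_derivative y') (at s)" "(z has_vector_derivative z') (at s)"
  shows "((\<lambda>s. M (y s) \<bullet> z s) has_vector_derivative M (y s) \<bullet> z' + M y' \<bullet> z s) (at s)"
  by (rule bounded_bilinear.has_vector_derivative[OF bounded_bilinear_inner
      bounded_linear.has_vector_derivative[OF M assms(2)] assms(3)])

context
  fixes X :: "(real ^ 'l::finite) \<times> real \<Rightarrow> 'b::real_inner"
    and M :: "'b \<Rightarrow> 'b"
  assumes X: "smooth X"
    and M: "bounded_linear M"
begin

lemma pderiv_q_inner_linear:
  assumes "jet_expr X Y" "jet_expr X Z"
  shows "pderiv_q j k (\<lambda>qs t. M (Y qs t) \<bullet> Z qs t)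
    = (\<lambda>qs t. M (Y qs t) \<bullet> pderiv_q j k Z qs t + M (pderiv_q j k Y qs t) \<bullet> Z qs t)"
proof (intro ext pderiv_q_eqI)
  fix qs t
  show "((\<lambda>s. M (Y (qs(j := qs j + s *\<^sub>R axis k 1)) t) \<bullet> Z (qs(j := qs j + s *\<^sub>R axis k 1)) t)
      has_vector_derivative M (Y qs t) \<bullet> pderiv_q j k Z qs t + M (pderiv_q j k Y qs t) \<bullet> Z qs t) (at 0)"
    using has_vector_derivative_inner_linear[OF M jet_expr_has_pderiv_q[OF X assms(1)]
        jet_expr_has_pderiv_q[OF X assms(2)]]
    by simp
qed

lemma pderiv_t_inner_linear:
  assumes "jet_expr X Y" "jet_expr X Z"
  shows "pderiv_t (\<lambda>qs t. M (Y qs t) \<bullet> Z qs t)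
    = (\<lambda>qs t. M (Y qs t) \<bullet> pderiv_t Z qs t + M (pderiv_t Y qs t) \<bullet> Z qs t)"
  by (intro ext pderiv_t_eqI has_vector_derivative_inner_linear M jet_expr_has_pderiv_t[OF X] assms)

lemma total_dt_inner_linear:
  assumes "jet_expr X Y" "jet_expr X Z"
  shows "total_dt kk (\<lambda>qs t. M (Y qs t) \<bullet> Z qs t)
    = (\<lambda>qs t. M (Y qs t) \<bullet> total_dt kk Z qs t + M (total_dt kk Y qs t) \<bullet> Z qs t)"
proof (intro ext)
  fix qs t
  have "M (total_dt kk Y qs t) = M (pderiv_t Y qs t)
      + (\<Sum>j\<le>kk. \<Sum>k\<in>UNIV. qs (Suc j) $ k *\<^sub>R M (pderiv_q j k Y qs t))"
    using M by (simp add: total_dt_def linear_add linear_sum linear_cmul bounded_linear.linear)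
  then show "total_dt kk (\<lambda>qs t. M (Y qs t) \<bullet> Z qs t) qs t
      = M (Y qs t) \<bullet> total_dt kk Z qs t + M (total_dt kk Y qs t) \<bullet> Z qs t"
    unfolding total_dt_def pderiv_q_inner_linear[OF assms] pderiv_t_inner_linear[OF assms]
    by (simp add: inner_add_left inner_add_right inner_sum_left inner_sum_right sum.distrib algebra_simps)
qed

lemma pderiv_q_half_quadratic:
  assumes "jet_expr X Y" and M_sym: "\<And>v w. M v \<bullet> w = M w \<bullet> v"
  shows "pderiv_q j k (\<lambda>qs t. (1/2) * (M (Y qs t) \<bullet> Y qs t))
    = (\<lambda>qs t. M (Y qs t) \<bullet> pderiv_q j k Y qs t)"
proof (intro ext pderiv_q_eqI)
  fix qs t
  have "((\<lambda>s. M (Y (qs(j := qs j + s *\<^sub>R axis k 1)) t) \<bullet> Y (qs(j := qs j + s *\<^sub>R axis k 1)) t)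
      has_vector_derivative M (Y qs t) \<bullet> pderiv_q j k Y qs t + M (pderiv_q j k Y qs t) \<bullet> Y qs t) (at 0)"
    using has_vector_derivative_inner_linear[OF M jet_expr_has_pderiv_q[OF X assms(1)]
        jet_expr_has_pderiv_q[OF X assms(1)]]
    by simp
  from has_vector_derivative_mult_right[OF this, of "1/2"]
  show "((\<lambda>s. (1/2) * (M (Y (qs(j := qs j + s *\<^sub>R axis k 1)) t) \<bullet> Y (qs(j := qs j + s *\<^sub>R axis k 1)) t))
      has_vector_derivative M (Y qs t) \<bullet> pderiv_q j k Y qs t) (at 0)"
    using M_sym[of "pderiv_q j k Y qs t"] by simp
qed

end

definition mass_scale :: "('p::finite \<Rightarrow> real) \<Rightarrow> real ^ 'n ^ 'p \<Rightarrow> real ^ 'n ^ 'p" where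
  "mass_scale m v = (\<chi> i. m i *\<^sub>R v $ i)"

lemma bounded_linear_mass_scale: "bounded_linear (mass_scale m)"
  by (intro linear_conv_bounded_linear[THEN iffD1] linearI) (simp_all add: mass_scale_def vec_eq_iff algebra_simps)

lemma mass_scale_inner_commute: "mass_scale m v \<bullet> w = mass_scale m w \<bullet> v"
  by (simp add: mass_scale_def inner_vec_def inner_commute mult_ac)

theorem proposition1p4:
  fixes X :: "(real ^ 'l::finite) \<times> real \<Rightarrow> real ^ 3 ^ 'p::finite"
    and m :: "'p \<Rightarrow> real"
    and r :: nat and k :: 'l
    and qs :: "nat \<Rightarrow> real ^ 'l" and t :: real
  assumes "smooth X"
    and "\<And>i. m i > 0"
  shows "Qder m X (Suc r) qs t \<bullet> pderiv_q 0 k (Xder X 0) qs t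
       = total_dt (Suc r) (pderiv_q (Suc r) k (Tr m X r)) qs t
         - (1 / real (Suc r)) * pderiv_q r k (Tr m X r) qs t"
proof -
  note X = \<open>smooth X\<close>
  note M = bounded_linear_mass_scale[of m] and M_sym = mass_scale_inner_commute[of m]
  define Y where "Y = Xder X (Suc r)"
  define J where "J = pderiv_q 0 k (Xder X 0)"
  have Y: "jet_expr X Y" and J: "jet_expr X J"
    unfolding Y_def J_def by (intro jet_expr_Xder jet_expr_pderiv_q X)+
  have T: "Tr m X r = (\<lambda>qs t. (1/2) * (mass_scale m (Y qs t) \<bullet> Y qs t))"
    by (simp add: Tr_def Qder_def mass_scale_def Y_def)
  have Q: "Qder m X (Suc r) = (\<lambda>qs t. mass_scale m (total_dt (Suc r) Y qs t))"
    by (simp add: Qder_def mass_scale_def Y_def)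
  have "pderiv_q (Suc r) k Y = J"
    unfolding Y_def J_def by (rule pderiv_q_Xder_top[OF X])
  then have dT_top: "pderiv_q (Suc r) k (Tr m X r) = (\<lambda>qs t. mass_scale m (Y qs t) \<bullet> J qs t)"
    unfolding T pderiv_q_half_quadratic[OF X M Y M_sym] by simp
  have "pderiv_q r k Y = (\<lambda>qs t. real (Suc r) *\<^sub>R total_dt 0 J qs t)"
    unfolding Y_def J_def by (rule pderiv_q_Xder_below[OF X])
  then have dT_below:
    "pderiv_q r k (Tr m X r) = (\<lambda>qs t. real (Suc r) * (mass_scale m (Y qs t) \<bullet> total_dt 0 J qs t))"
    unfolding T pderiv_q_half_quadratic[OF X M Y M_sym] by simp
  have "total_dt (Suc r) J = total_dt 0 J"
    unfolding J_def by (intro total_dt_eq_if_depends_upto depends_upto_pderiv_q depends_upto_Xder) simp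
  then have "total_dt (Suc r) (pderiv_q (Suc r) k (Tr m X r)) qs t
      = mass_scale m (Y qs t) \<bullet> total_dt 0 J qs t + Qder m X (Suc r) qs t \<bullet> J qs t"
    unfolding dT_top total_dt_inner_linear[OF X M Y J] Q by simp
  with dT_below show ?thesis
    unfolding J_def by simp
qed

end
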